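(* Let $k$ be a field, $n\ge2$, $d>2$, and let $B\subseteq\mathbb{N}^n$ be the semigroup generated by a set $U$ with $\{\mathbf{m}\in T_{n,d}:\max(\mathbf{m})\ge d-1\}\subseteq U\subsetneq T_{n,d}$. Then $\dim k[B]=n$ and $\operatorname{depth}k[B]=1$ (at its homogeneous maximal ideal); in particular $k[B]$ is not Cohen–Macaulay.
   Context: $T_{n,d}=\{\mathbf{a}\in\mathbb{N}^n:\sum a_i=d\}$, $\max(\mathbf{a})=\max_i a_i$. For a semigroup $B\subseteq\mathbb{N}^n$, $k[B]\subseteq k[x_1,\dots,x_n]$ is the $k$-span of the monomials $x_1^{b_1}\cdots x_n^{b_n}$, $\mathbf{b}\in B$; equivalently $k[B]$ is the $k$-subalgebra generated by the monomials with exponent vectors in $U$. *)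

theory Defs
  imports "HOL-Library.Poly_Mapping" "HOL-Library.Extended_Nat" "HOL-Algebra.Ideal"
begin

text \<open>Exponent vectors in N^n are represented as finitely supported maps
  nat \<Rightarrow>0 nat whose keys lie in {..<n}; polynomials in x_0..x_{n-1} over k are
  elements of (nat \<Rightarrow>0 nat) \<Rightarrow>0 'k (monomial exponent \<mapsto> coefficient).\<close>

definition Nvec :: "nat \<Rightarrow> (nat \<Rightarrow>\<^sub>0 nat) set" where
  "Nvec n = {a. Poly_Mapping.keys a \<subseteq> {..<n}}"

definition T :: "nat \<Rightarrow> nat \<Rightarrow> (nat \<Rightarrow>\<^sub>0 nat) set" where
  "T n d = {a \<in> Nvec n. (\<Sum>i<n. Poly_Mapping.lookup a i) = d}"

definition maxv :: "nat \<Rightarrow> (nat \<Rightarrow>\<^sub>0 nat) \<Rightarrow> nat" where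
  "maxv n a = Max ((Poly_Mapping.lookup a) ` {..<n})"

inductive_set gen_semigroup :: "(nat \<Rightarrow>\<^sub>0 nat) set \<Rightarrow> (nat \<Rightarrow>\<^sub>0 nat) set"
  for U where
  zero: "0 \<in> gen_semigroup U"
| add: "u \<in> U \<Longrightarrow> b \<in> gen_semigroup U \<Longrightarrow> u + b \<in> gen_semigroup U"

definition semigroup_ring_carrier :: "(nat \<Rightarrow>\<^sub>0 nat) set \<Rightarrow> ((nat \<Rightarrow>\<^sub>0 nat) \<Rightarrow>\<^sub>0 'k::field) set" where
  "semigroup_ring_carrier B = {p. Poly_Mapping.keys p \<subseteq> B}"

definition semigroup_ring :: "(nat \<Rightarrow>\<^sub>0 nat) set \<Rightarrow> ((nat \<Rightarrow>\<^sub>0 nat) \<Rightarrow>\<^sub>0 'k::field) ring" where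
  "semigroup_ring B = \<lparr>carrier = semigroup_ring_carrier B, monoid.mult = (*), one = 1,
      zero = 0, add = (+)\<rparr>"

definition homog_max_ideal :: "(nat \<Rightarrow>\<^sub>0 nat) set \<Rightarrow> ((nat \<Rightarrow>\<^sub>0 nat) \<Rightarrow>\<^sub>0 'k::field) set" where
  "homog_max_ideal B = {p \<in> semigroup_ring_carrier B. Poly_Mapping.lookup p 0 = 0}"

definition krull_dim :: "('a, 'b) ring_scheme \<Rightarrow> enat" where
  "krull_dim R = Sup {enat (length Ps - 1) | Ps. Ps \<noteq> [] \<and>
      (\<forall>P \<in> set Ps. primeideal P R) \<and> sorted_wrt (\<subset>) Ps}"

definition regular_seq :: "('a, 'b) ring_scheme \<Rightarrow> 'a set \<Rightarrow> 'a list \<Rightarrow> bool" where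
  "regular_seq R M xs \<longleftrightarrow> set xs \<subseteq> M \<and>
     (\<forall>i < length xs. \<forall>y \<in> carrier R.
        xs ! i \<otimes>\<^bsub>R\<^esub> y \<in> Idl\<^bsub>R\<^esub> (set (take i xs)) \<longrightarrow> y \<in> Idl\<^bsub>R\<^esub> (set (take i xs))) \<and>
     Idl\<^bsub>R\<^esub> (set xs) \<noteq> carrier R"

definition depth :: "('a, 'b) ring_scheme \<Rightarrow> 'a set \<Rightarrow> enat" where
  "depth R M = Sup {enat (length xs) | xs. regular_seq R M xs}"

end

theory Submission
  imports Defs
begin

(*
  Dimension.  k[B] lies in a polynomial ring in n variables, so any n + 1 of its elements satisfy
  a nontrivial polynomial relation (there are more power products of bounded degree than monomials
  they can involve).  Given a chain P_0 < ... < P_(n+1) of primes and y_i in P_(i+1) - P_i, the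
  lexicographically least part of a relation among the y_i is pushed up the chain one prime at a
  time, until its nonzero constant coefficient lies in P_(n+1).  Conversely, since B contains the
  pure powers x_i^d, the monomial primes spanned by the monomials that involve one of x_1, ..., x_j
  (j = 0, ..., n) form a chain of length n.

  Every exponent vector of degree kd is a sum of the generators (d-1) e_i + e_j as soon as
  k >= n (d - 2), so among the vectors of degree in dN missing from B there is one, w, of maximal
  degree; w + b lies in B for every nonzero b in B.  For a regular sequence x, y in the maximal
  ideal, y (x^w x) = (x^w y) x lies in (x), hence x^w x = r x with r in k[B], i.e. x^w is in k[B],
  which is absurd.  A monomial x_1^d is a regular element, so the depth is exactly 1.
*)

abbreviation keys :: "('a \<Rightarrow>\<^sub>0 'b::zero) \<Rightarrow> 'a set" where
  "keys \<equiv> Poly_Mapping.keys"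

abbreviation lookup :: "('a \<Rightarrow>\<^sub>0 'b::zero) \<Rightarrow> 'a \<Rightarrow> 'b" where
  "lookup \<equiv> Poly_Mapping.lookup"

abbreviation single :: "'a \<Rightarrow> 'b::zero \<Rightarrow> 'a \<Rightarrow>\<^sub>0 'b" where
  "single \<equiv> Poly_Mapping.single"

type_synonym 'k pm = "(nat \<Rightarrow>\<^sub>0 nat) \<Rightarrow>\<^sub>0 'k"

abbreviation const :: "'k::zero \<Rightarrow> 'k pm" where
  "const c \<equiv> single 0 c"

section \<open>Monoid algebras\<close>

lemma gen_semigroup_add:
  "a \<in> gen_semigroup U \<Longrightarrow> b \<in> gen_semigroup U \<Longrightarrow> a + b \<in> gen_semigroup U"
  by (induction a rule: gen_semigroup.induct) (auto simp: add.assoc intro: gen_semigroup.add)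

lemma gen_semigroup_base: "u \<in> U \<Longrightarrow> u \<in> gen_semigroup U"
  using gen_semigroup.add[of u U 0] gen_semigroup.zero by simp

lemma semigroup_ring_simps [simp]:
  "carrier (semigroup_ring B) = semigroup_ring_carrier B"
  "mult (semigroup_ring B) = (*)" "one (semigroup_ring B) = 1"
  "zero (semigroup_ring B) = 0" "add (semigroup_ring B) = (+)"
  by (simp_all add: semigroup_ring_def)

lemma mem_semigroup_ring_carrier [simp]: "p \<in> semigroup_ring_carrier B \<longleftrightarrow> keys p \<subseteq> B"
  by (simp add: semigroup_ring_carrier_def)

locale exponent_monoid =
  fixes B :: "(nat \<Rightarrow>\<^sub>0 nat) set"
  assumes zero_mem: "0 \<in> B" and add_mem: "a \<in> B \<Longrightarrow> b \<in> B \<Longrightarrow> a + b \<in> B"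
begin

abbreviation R :: "'k::field pm ring" where "R \<equiv> semigroup_ring B"

lemma closed_add: "keys p \<subseteq> B \<Longrightarrow> keys q \<subseteq> B \<Longrightarrow> keys (p + q) \<subseteq> B"
  using keys_add[of p q] by blast

lemma closed_mult:
  fixes p q :: "'k::field pm"
  assumes "keys p \<subseteq> B" and "keys q \<subseteq> B"
  shows "keys (p * q) \<subseteq> B"
proof
  fix x assume "x \<in> keys (p * q)"
  then obtain a b where "x = a + b" "a \<in> keys p" "b \<in> keys q" using keys_mult[of p q] by blast
  then show "x \<in> B" using add_mem assms by blast
qed

lemma closed_one: "keys (1 :: 'k::field pm) \<subseteq> B"
  using zero_mem by simp

lemma closed_const: "keys (const c) \<subseteq> B"
  using zero_mem by simp

lemma closed_sum:
  "(\<And>i. i \<in> I \<Longrightarrow> keys (f i) \<subseteq> B) \<Longrightarrow> keys (\<Sum>i\<in>I. f i :: 'k::field pm) \<subseteq> B"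
  by (induction I rule: infinite_finite_induct) (simp_all add: closed_add zero_mem)

lemma closed_prod:
  "(\<And>i. i \<in> I \<Longrightarrow> keys (f i) \<subseteq> B) \<Longrightarrow> keys (\<Prod>i\<in>I. f i :: 'k::field pm) \<subseteq> B"
  by (induction I rule: infinite_finite_induct) (simp_all add: closed_mult closed_one zero_mem)

lemma closed_power: "keys (p :: 'k::field pm) \<subseteq> B \<Longrightarrow> keys (p ^ k) \<subseteq> B"
  by (induction k) (simp_all add: closed_mult zero_mem)

lemma semigroup_ring_cring: "cring (R :: 'k::field pm ring)"
proof (rule cringI)
  show "abelian_group (R :: 'k pm ring)"
  proof (rule abelian_groupI)
    fix x y :: "'k pm"
    assume "x \<in> carrier R" and "y \<in> carrier R"
    then show "x \<oplus>\<^bsub>R\<^esub> y \<in> carrier R" and "\<exists>y\<in>carrier R. y \<oplus>\<^bsub>R\<^esub> x = \<zero>\<^bsub>R\<^esub>"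
      by (auto simp: closed_add intro: bexI[of _ "- x"])
  qed (simp_all add: add_ac)
  show "comm_monoid (R :: 'k pm ring)"
    by (rule comm_monoidI) (simp_all add: closed_mult zero_mem mult_ac)
qed (simp_all add: distrib_right)

lemma a_inv_eq: "x \<in> carrier (R :: 'k::field pm ring) \<Longrightarrow> \<ominus>\<^bsub>R\<^esub> x = - x"
proof -
  interpret cring "R :: 'k pm ring" by (rule semigroup_ring_cring)
  assume "x \<in> carrier R"
  then show ?thesis by (intro minus_equality) auto
qed

lemma semigroup_ring_idealI:
  assumes "I \<subseteq> carrier (R :: 'k::field pm ring)" "0 \<in> I"
    and "\<And>a b. a \<in> I \<Longrightarrow> b \<in> I \<Longrightarrow> a + b \<in> I"
    and "\<And>a. a \<in> I \<Longrightarrow> - a \<in> I"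
    and "\<And>a x. a \<in> I \<Longrightarrow> x \<in> carrier R \<Longrightarrow> x * a \<in> I"
  shows "ideal I R"
proof -
  interpret cring "R :: 'k pm ring" by (rule semigroup_ring_cring)
  show ?thesis
  proof (rule idealI)
    show "subgroup I (add_monoid R)"
    proof
      fix x assume "x \<in> I"
      then show "inv\<^bsub>add_monoid R\<^esub> x \<in> I"
        using a_inv_eq[of x] assms(1,4) unfolding a_inv_def by auto
    qed (use assms in auto)
  qed (use assms in \<open>auto simp: mult.commute ring_axioms\<close>)
qed

lemma primeideal_props:
  assumes "primeideal P (R :: 'k::field pm ring)"
  shows "P \<subseteq> carrier R" and "0 \<in> P"
    and "\<And>a b. a \<in> P \<Longrightarrow> b \<in> P \<Longrightarrow> a + b \<in> P" and "\<And>a. a \<in> P \<Longrightarrow> - a \<in> P"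
    and "\<And>a x. a \<in> P \<Longrightarrow> x \<in> carrier R \<Longrightarrow> x * a \<in> P"
    and "\<And>a b. a \<in> carrier R \<Longrightarrow> b \<in> carrier R \<Longrightarrow> a * b \<in> P \<Longrightarrow> a \<in> P \<or> b \<in> P"
    and "1 \<notin> P"
proof -
  interpret primeideal P "R :: 'k pm ring" by (rule assms)
  show "P \<subseteq> carrier R" by (rule a_subset)
  show "0 \<in> P" "\<And>a b. a \<in> P \<Longrightarrow> b \<in> P \<Longrightarrow> a + b \<in> P"
    using additive_subgroup.zero_closed[OF is_additive_subgroup]
      additive_subgroup.a_closed[OF is_additive_subgroup] by simp_all
  show "\<And>a. a \<in> P \<Longrightarrow> - a \<in> P"
    using additive_subgroup.a_inv_closed[OF is_additive_subgroup] a_inv_eq a_subset by fastforce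
  show "\<And>a x. a \<in> P \<Longrightarrow> x \<in> carrier R \<Longrightarrow> x * a \<in> P"
    using I_l_closed by simp
  show "\<And>a b. a \<in> carrier R \<Longrightarrow> b \<in> carrier R \<Longrightarrow> a * b \<in> P \<Longrightarrow> a \<in> P \<or> b \<in> P"
    using I_prime by simp
  show "1 \<notin> P"
    using one_imp_carrier I_notcarr by auto
qed

lemma power_notin_primeideal:
  assumes "primeideal P (R :: 'k::field pm ring)" "y \<in> carrier R" "y \<notin> P"
  shows "y ^ m \<notin> P"
proof (induction m)
  case (Suc m)
  have "y ^ m \<in> carrier R" using assms(2) closed_power by simp
  then show ?case using primeideal_props(6)[OF assms(1,2)] Suc assms(3) by auto
qed (use primeideal_props(7)[OF assms(1)] in simp)

end

section \<open>Algebraic relations and chains of prime ideals\<close>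

interpretation poly_vs: vector_space "\<lambda>(c::'k::field) (p::'k pm). const c * p"
  by unfold_locales (simp_all add: distrib_left distrib_right single_add mult_single mult.assoc)

lemma poly_mapping_sum_single: "p = (\<Sum>g\<in>keys p. single g (lookup p g))"
proof (rule poly_mapping_eqI)
  fix k
  have "lookup (\<Sum>g\<in>keys p. single g (lookup p g)) k
      = (\<Sum>g\<in>keys p. if g = k then lookup p g else 0)"
    by (simp add: lookup_sum lookup_single when_def)
  then show "lookup p k = lookup (\<Sum>g\<in>keys p. single g (lookup p g)) k"
    by (simp add: sum.delta' in_keys_iff)
qed

lemma in_span_monomials:
  fixes p :: "'k::field pm"
  assumes "keys p \<subseteq> G"
  shows "p \<in> poly_vs.span ((\<lambda>g. single g 1) ` G)"
proof (subst poly_mapping_sum_single, rule poly_vs.span_sum)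
  fix g assume "g \<in> keys p"
  then have "single g (1::'k) \<in> poly_vs.span ((\<lambda>g. single g 1) ` G)"
    using assms by (intro poly_vs.span_base) auto
  from poly_vs.span_scale[OF this, of "lookup p g"]
  show "single g (lookup p g) \<in> poly_vs.span ((\<lambda>g. single g 1) ` G)"
    by (simp add: mult_single)
qed

definition max_exponent_le :: "nat \<Rightarrow> 'k::field pm \<Rightarrow> bool" where
  "max_exponent_le E p \<longleftrightarrow> (\<forall>g\<in>keys p. \<forall>i. lookup g i \<le> E)"

lemma max_exponent_le_mult:
  assumes "max_exponent_le a p" "max_exponent_le b q"
  shows "max_exponent_le (a + b) (p * q)"
  unfolding max_exponent_le_def
proof (intro ballI allI)
  fix g i assume "g \<in> keys (p * q)"
  then obtain u v where "g = u + v" "u \<in> keys p" "v \<in> keys q" using keys_mult[of p q] by blast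
  then show "lookup g i \<le> a + b"
    using assms by (simp add: max_exponent_le_def lookup_add add_mono)
qed

lemma max_exponent_le_one: "max_exponent_le 0 1"
  by (simp add: max_exponent_le_def)

lemma max_exponent_le_mono: "a \<le> b \<Longrightarrow> max_exponent_le a p \<Longrightarrow> max_exponent_le b p"
  by (auto simp: max_exponent_le_def intro: order_trans)

lemma max_exponent_le_power: "max_exponent_le a p \<Longrightarrow> max_exponent_le (k * a) (p ^ k)"
  by (induction k) (simp_all add: max_exponent_le_one max_exponent_le_mult)

lemma max_exponent_le_prod:
  "finite I \<Longrightarrow> (\<And>i. i \<in> I \<Longrightarrow> max_exponent_le (a i) (f i))
    \<Longrightarrow> max_exponent_le (\<Sum>i\<in>I. a i) (\<Prod>i\<in>I. f i)"
  by (induction I rule: finite_induct) (simp_all add: max_exponent_le_one max_exponent_le_mult)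

lemma lookup_Nvec_eq_0: "g \<in> Nvec n \<Longrightarrow> \<not> i < n \<Longrightarrow> lookup g i = 0"
  by (auto simp: Nvec_def in_keys_iff)

lemma Nvec_add: "a \<in> Nvec n \<Longrightarrow> b \<in> Nvec n \<Longrightarrow> a + b \<in> Nvec n"
  using keys_add[of a b] by (auto simp: Nvec_def)

lemma bounded_Nvec_finite_card:
  "finite {g \<in> Nvec n. \<forall>i. lookup g i \<le> M} \<and> card {g \<in> Nvec n. \<forall>i. lookup g i \<le> M} \<le> (M + 1) ^ n"
proof -
  let ?G = "{g \<in> Nvec n. \<forall>i. lookup g i \<le> M}"
  let ?f = "\<lambda>g. restrict (lookup g) {..<n}"
  have inj: "inj_on ?f ?G"
  proof (rule inj_onI, rule poly_mapping_eqI)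
    fix a b i assume "a \<in> ?G" "b \<in> ?G" "?f a = ?f b"
    then show "lookup a i = lookup b i"
      by (cases "i < n") (auto simp: lookup_Nvec_eq_0 dest: fun_cong[of _ _ i])
  qed
  have sub: "?f ` ?G \<subseteq> {..<n} \<rightarrow>\<^sub>E {..M}"
    by (rule image_subsetI) (simp add: restrict_PiE_iff)
  have fin: "finite ({..<n} \<rightarrow>\<^sub>E {..M})" by (simp add: finite_PiE)
  have "finite ?G" using finite_imageD[OF finite_subset[OF sub fin] inj] .
  moreover have "card ?G \<le> (M + 1) ^ n"
    using card_image[OF inj] card_mono[OF fin sub] by (simp add: card_PiE)
  ultimately show ?thesis by blast
qed

lemma card_monomials_less_card_box: "(K::nat) \<ge> 1 \<Longrightarrow> (K * K ^ n + 1) ^ n < (K ^ n + 1) ^ (n + 1)"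
proof -
  assume K: "K \<ge> 1"
  have "(K * K ^ n + 1) ^ n \<le> (K * (K ^ n + 1)) ^ n" by (rule power_mono) (use K in auto)
  also have "\<dots> = K ^ n * (K ^ n + 1) ^ n" by (rule power_mult_distrib)
  also have "\<dots> < (K ^ n + 1) ^ (n + 1)" using K by simp
  finally show ?thesis .
qed

lemma max_exponent_le_sum_keys:
  assumes "keys p \<subseteq> Nvec n"
  shows "max_exponent_le (\<Sum>g\<in>keys p. \<Sum>j<n. lookup g j) p"
  unfolding max_exponent_le_def
proof (intro ballI allI)
  fix g j assume g: "g \<in> keys p"
  show "lookup g j \<le> (\<Sum>g\<in>keys p. \<Sum>j<n. lookup g j)"
  proof (cases "j < n")
    case True
    have "lookup g j \<le> (\<Sum>j<n. lookup g j)" by (rule member_le_sum) (use True in auto)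
    also have "\<dots> \<le> (\<Sum>g\<in>keys p. \<Sum>j<n. lookup g j)" by (rule member_le_sum) (use g in auto)
    finally show ?thesis .
  qed (use assms g in \<open>auto simp: lookup_Nvec_eq_0\<close>)
qed

lemma relation_of_card_gt_dim:
  fixes f :: "'a \<Rightarrow> 'k::field pm"
  assumes "finite W" "finite X" "card W < card X" "\<And>x. x \<in> X \<Longrightarrow> f x \<in> poly_vs.span W"
  shows "\<exists>A c. A \<subseteq> X \<and> A \<noteq> {} \<and> (\<forall>x\<in>A. c x \<noteq> 0) \<and> (\<Sum>x\<in>A. const (c x) * f x) = 0"
proof (cases "inj_on f X")
  case True
  have "f ` X \<subseteq> poly_vs.span W" using assms(4) by blast
  moreover have "\<not> card (f ` X) \<le> card W" using assms(3) card_image[OF True] by simp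
  ultimately have "poly_vs.dependent (f ` X)"
    using poly_vs.independent_span_bound[OF assms(1), of "f ` X"] by blast
  then obtain t u where t: "finite t" "t \<subseteq> f ` X" "(\<Sum>v\<in>t. const (u v) * v) = 0" "\<exists>v\<in>t. u v \<noteq> 0"
    unfolding poly_vs.dependent_explicit by blast
  define A where "A = {x \<in> X. f x \<in> t \<and> u (f x) \<noteq> 0}"
  have "(\<Sum>x\<in>A. const (u (f x)) * f x) = (\<Sum>v\<in>f ` A. const (u v) * v)"
    using sum.reindex[OF inj_on_subset[OF True], of A "\<lambda>v. const (u v) * v"] by (simp add: A_def)
  also have "f ` A = {v\<in>t. u v \<noteq> 0}" using t(2) unfolding A_def by auto
  also have "(\<Sum>v\<in>{v\<in>t. u v \<noteq> 0}. const (u v) * v) = (\<Sum>v\<in>t. const (u v) * v)"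
    by (rule sum.mono_neutral_left) (use t(1) in auto)
  finally have "(\<Sum>x\<in>A. const (u (f x)) * f x) = 0" using t(3) by simp
  moreover have "A \<noteq> {}" using t(2,4) unfolding A_def by auto
  ultimately show ?thesis by (intro exI[of _ A] exI[of _ "\<lambda>x. u (f x)"]) (auto simp: A_def)
next
  case False
  then obtain x1 x2 where "x1 \<in> X" "x2 \<in> X" "x1 \<noteq> x2" "f x1 = f x2"
    unfolding inj_on_def by blast
  then show ?thesis
    by (intro exI[of _ "{x1, x2}"] exI[of _ "\<lambda>x. if x = x1 then 1 else -1"]) (auto simp: single_uminus)
qed

lemma algebraic_relation_exists:
  fixes y :: "nat \<Rightarrow> 'k::field pm"
  assumes y: "\<And>i. i \<le> n \<Longrightarrow> keys (y i) \<subseteq> Nvec n"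
  shows "\<exists>A c. finite A \<and> A \<noteq> {} \<and> A \<subseteq> extensional {..n} \<and> (\<forall>b\<in>A. c b \<noteq> 0) \<and>
    (\<Sum>b\<in>A. const (c b) * (\<Prod>i\<le>n. y i ^ b i)) = 0"
proof -
  interpret Nvec: exponent_monoid "Nvec n"
    by unfold_locales (simp_all add: Nvec_add, simp add: Nvec_def)
  define E where "E = (\<Sum>i\<le>n. \<Sum>g\<in>keys (y i). \<Sum>j<n. lookup g j)"
  have E: "max_exponent_le E (y i)" if "i \<le> n" for i
  proof (rule max_exponent_le_mono[OF _ max_exponent_le_sum_keys[OF y[OF that]]])
    show "(\<Sum>g\<in>keys (y i). \<Sum>j<n. lookup g j) \<le> E"
      unfolding E_def by (rule member_le_sum) (use that in auto)
  qed
  \<comment> \<open>the (D+1)^(n+1) power products with exponents at most D outnumber the monomials they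
     can involve\<close>
  define K where "K = (n + 1) * E + 1"
  define D where "D = K ^ n"
  define Box where "Box = {..n} \<rightarrow>\<^sub>E {..D}"
  define G where "G = {g \<in> Nvec n. \<forall>i. lookup g i \<le> K * D}"
  define W where "W = (\<lambda>g. single g (1::'k)) ` G"
  have finW: "finite W" and "card W \<le> (K * D + 1) ^ n"
    using bounded_Nvec_finite_card[of n "K * D"] card_image_le[of G "\<lambda>g. single g 1"]
    unfolding W_def G_def by (auto intro: order_trans)
  moreover have finBox: "finite Box" and "card Box = (D + 1) ^ (n + 1)"
    unfolding Box_def by (simp_all add: finite_PiE card_PiE)
  moreover have "(K * D + 1) ^ n < (D + 1) ^ (n + 1)"
    unfolding D_def K_def by (rule card_monomials_less_card_box) simp
  ultimately have "card W < card Box" by linarith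
  have span: "(\<Prod>i\<le>n. y i ^ b i) \<in> poly_vs.span W" if "b \<in> Box" for b
  proof -
    have "max_exponent_le (\<Sum>i\<le>n. b i * E) (\<Prod>i\<le>n. y i ^ b i)"
      by (rule max_exponent_le_prod) (auto intro: max_exponent_le_power E)
    moreover have "(\<Sum>i\<le>n. b i * E) \<le> (\<Sum>i\<le>n. D * E)"
      by (rule sum_mono) (use that in \<open>auto simp: Box_def PiE_def Pi_def\<close>)
    moreover have "(\<Sum>i\<le>n. D * E) \<le> K * D" unfolding K_def by (simp add: algebra_simps)
    ultimately have "max_exponent_le (K * D) (\<Prod>i\<le>n. y i ^ b i)"
      using max_exponent_le_mono by (meson order_trans)
    moreover have "keys (\<Prod>i\<le>n. y i ^ b i) \<subseteq> Nvec n"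
      by (intro Nvec.closed_prod Nvec.closed_power y) simp
    ultimately have "keys (\<Prod>i\<le>n. y i ^ b i) \<subseteq> G" unfolding G_def max_exponent_le_def by auto
    then show ?thesis unfolding W_def by (rule in_span_monomials)
  qed
  obtain A c where "A \<subseteq> Box" "A \<noteq> {}" "\<forall>b\<in>A. c b \<noteq> 0"
    "(\<Sum>b\<in>A. const (c b) * (\<Prod>i\<le>n. y i ^ b i)) = 0"
    using relation_of_card_gt_dim[of W Box "\<lambda>b. \<Prod>i\<le>n. y i ^ b i", OF finW finBox _ span]
      \<open>card W < card Box\<close> by blast
  moreover from \<open>A \<subseteq> Box\<close> have "finite A" "A \<subseteq> extensional {..n}"
    using finBox finite_subset unfolding Box_def by (blast, auto simp: PiE_def)
  ultimately show ?thesis by blast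
qed

primrec lex_min_layer :: "(nat \<Rightarrow> nat) set \<Rightarrow> nat \<Rightarrow> (nat \<Rightarrow> nat) set" where
  "lex_min_layer A 0 = A"
| "lex_min_layer A (Suc j) =
    {b \<in> lex_min_layer A j. b j = Min ((\<lambda>b. b j) ` lex_min_layer A j)}"

lemma lex_min_layer_subset: "lex_min_layer A j \<subseteq> A"
  by (induction j) auto

lemma finite_lex_min_layer: "finite A \<Longrightarrow> finite (lex_min_layer A j)"
  using lex_min_layer_subset finite_subset by blast

lemma lex_min_layer_nonempty: "finite A \<Longrightarrow> A \<noteq> {} \<Longrightarrow> lex_min_layer A j \<noteq> {}"
proof (induction j)
  case (Suc j)
  then have "Min ((\<lambda>b. b j) ` lex_min_layer A j) \<in> (\<lambda>b. b j) ` lex_min_layer A j"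
    by (intro Min_in) (simp_all add: finite_lex_min_layer)
  then show ?case by auto
qed simp

lemma lex_min_layer_agree: "b \<in> lex_min_layer A j \<Longrightarrow> b' \<in> lex_min_layer A j \<Longrightarrow> i < j \<Longrightarrow> b i = b' i"
proof (induction j arbitrary: i)
  case (Suc j)
  then show ?case by (cases "i = j") auto
qed simp

lemma lex_min_layer_less:
  assumes "finite A" "b \<in> lex_min_layer A j" "b \<notin> lex_min_layer A (Suc j)"
  shows "Min ((\<lambda>b. b j) ` lex_min_layer A j) < b j"
proof -
  have "Min ((\<lambda>b. b j) ` lex_min_layer A j) \<le> b j"
    using assms(2) by (intro Min_le) (simp_all add: finite_lex_min_layer assms(1))
  then show ?thesis using assms(2,3) by auto
qed

lemma lex_min_layer_last:
  assumes "finite A" "A \<noteq> {}" "A \<subseteq> extensional {..n}"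
  obtains b where "b \<in> A" "lex_min_layer A (Suc n) = {b}"
proof -
  obtain b where b: "b \<in> lex_min_layer A (Suc n)"
    using lex_min_layer_nonempty[OF assms(1,2)] by blast
  have "b' = b" if "b' \<in> lex_min_layer A (Suc n)" for b'
  proof (rule extensionalityI[of _ "{..n}"])
    show "b' \<in> extensional {..n}" "b \<in> extensional {..n}"
      using lex_min_layer_subset assms(3) that b by blast+
  qed (use lex_min_layer_agree[OF that b] in auto)
  then show ?thesis using that b lex_min_layer_subset by blast
qed

definition layer_sum ::
    "((nat \<Rightarrow> nat) \<Rightarrow> 'a) \<Rightarrow> (nat \<Rightarrow> 'a) \<Rightarrow> nat \<Rightarrow> (nat \<Rightarrow> nat) set \<Rightarrow> nat \<Rightarrow> 'a::comm_ring_1" where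
  "layer_sum c y n A j = (\<Sum>b\<in>lex_min_layer A j. c b * (\<Prod>i\<in>{j..n}. y i ^ b i))"

lemma layer_sum_step:
  assumes "finite A" "j \<le> n"
  defines "m \<equiv> Min ((\<lambda>b. b j) ` lex_min_layer A j)"
  shows "layer_sum c y n A j = y j ^ m * (layer_sum c y n A (Suc j) + y j *
    (\<Sum>b\<in>lex_min_layer A j - lex_min_layer A (Suc j).
       c b * (y j ^ (b j - Suc m) * (\<Prod>i\<in>{Suc j..n}. y i ^ b i))))"
proof -
  let ?L = "lex_min_layer A j" and ?L' = "lex_min_layer A (Suc j)"
  let ?t = "\<lambda>b. c b * (\<Prod>i\<in>{j..n}. y i ^ b i)"
  have split: "(\<Prod>i\<in>{j..n}. y i ^ b i) = y j ^ b j * (\<Prod>i\<in>{Suc j..n}. y i ^ b i)" for b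
    using prod.atLeast_Suc_atMost[OF assms(2)] by simp
  have "layer_sum c y n A j = sum ?t (?L - ?L') + sum ?t ?L'"
    unfolding layer_sum_def
    using sum.subset_diff[of ?L' ?L] finite_lex_min_layer[OF assms(1)] by auto
  also have "sum ?t ?L' = y j ^ m * layer_sum c y n A (Suc j)"
    unfolding layer_sum_def m_def by (simp add: sum_distrib_left split mult_ac)
  also have "sum ?t (?L - ?L') = y j ^ m * (y j *
      (\<Sum>b\<in>?L - ?L'. c b * (y j ^ (b j - Suc m) * (\<Prod>i\<in>{Suc j..n}. y i ^ b i))))"
    unfolding sum_distrib_left
  proof (rule sum.cong)
    fix b assume "b \<in> ?L - ?L'"
    then have "b j = m + 1 + (b j - Suc m)"
      using lex_min_layer_less[OF assms(1)] unfolding m_def by fastforce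
    then have "y j ^ b j = y j ^ m * (y j * y j ^ (b j - Suc m))"
      by (metis power_add power_one_right mult.assoc)
    then show "?t b = y j ^ m * (y j * (c b * (y j ^ (b j - Suc m) * (\<Prod>i\<in>{Suc j..n}. y i ^ b i))))"
      by (simp add: split mult_ac)
  qed simp
  finally show ?thesis by (simp add: distrib_left add.commute)
qed

context exponent_monoid
begin

lemma mem_primeideal_of_mult_power:
  assumes P: "primeideal P (R :: 'k::field pm ring)" and P': "primeideal P' (R :: 'k pm ring)"
    and "P \<subseteq> P'" "y \<in> P'" "y \<notin> P" and B: "keys y \<subseteq> B" "keys F \<subseteq> B" "keys G \<subseteq> B"
    and mem: "y ^ m * (F + y * G) \<in> P"
  shows "F \<in> P'"
proof -
  have "y ^ m \<notin> P" using power_notin_primeideal[OF P] assms(5) B(1) by simp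
  moreover have "keys (F + y * G) \<subseteq> B" using B by (simp add: closed_add closed_mult)
  ultimately have "F + y * G \<in> P'"
    using primeideal_props(6)[OF P, of "y ^ m"] mem closed_power[OF B(1)] \<open>P \<subseteq> P'\<close> by auto
  moreover have "G * y \<in> P'" using primeideal_props(5)[OF P' \<open>y \<in> P'\<close>] B(3) by simp
  ultimately have "(F + y * G) + - (G * y) \<in> P'" using primeideal_props(3,4)[OF P'] by blast
  then show ?thesis by (simp add: mult.commute)
qed

lemma const_mem_primeideal:
  assumes "primeideal P (R :: 'k::field pm ring)" "const c \<in> P"
  shows "c = 0"
proof (rule ccontr)
  assume "c \<noteq> 0"
  have "const (inverse c) * const c \<in> P"
    using primeideal_props(5)[OF assms] zero_mem by simp
  then show False using primeideal_props(7)[OF assms(1)] \<open>c \<noteq> 0\<close> by (simp add: mult_single)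
qed

lemma no_prime_chain_longer_than_rank:
  assumes BN: "B \<subseteq> Nvec n"
    and P: "\<And>i. i \<le> Suc n \<Longrightarrow> primeideal (P i) (R :: 'k::field pm ring)"
    and strict: "\<And>i. i \<le> n \<Longrightarrow> P i \<subset> P (Suc i)"
  shows False
proof -
  have "\<forall>i. \<exists>z. i \<le> n \<longrightarrow> z \<in> P (Suc i) \<and> z \<notin> P i" using strict by blast
  then obtain y where y: "\<And>i. i \<le> n \<Longrightarrow> y i \<in> P (Suc i) \<and> y i \<notin> P i" by metis
  have yB: "keys (y i) \<subseteq> B" if "i \<le> n" for i
  proof -
    have "y i \<in> carrier (R :: 'k pm ring)"
      using y[OF that] primeideal_props(1)[OF P[of "Suc i"]] that by blast
    then show ?thesis by simp
  qed
  obtain A c where A: "finite A" "A \<noteq> {}" "A \<subseteq> extensional {..n}" "\<forall>b\<in>A. c b \<noteq> (0::'k)"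
    and rel: "(\<Sum>b\<in>A. const (c b) * (\<Prod>i\<le>n. y i ^ b i)) = 0"
    using algebraic_relation_exists[of n y] yB BN by blast
  let ?F = "layer_sum (\<lambda>b. const (c b)) y n A"
  have closed: "keys (\<Sum>b\<in>S. const (c b) * (y j ^ e b * (\<Prod>i\<in>{l..n}. y i ^ b i))) \<subseteq> B"
    if "j \<le> n" for S j l e
    by (intro closed_sum closed_mult closed_const closed_power closed_prod yB that) simp
  \<comment> \<open>peeling off y j ^ m, with m the least j-th exponent in the layer, moves F j from P j to P (Suc j)\<close>
  have F: "?F j \<in> P j" if "j \<le> Suc n" for j
    using that
  proof (induction j)
    case 0
    then show ?case
      using rel primeideal_props(2)[OF P[of 0]] by (simp add: layer_sum_def atLeast0AtMost)
  next
    case (Suc j)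
    then have j: "j \<le> n" by simp
    obtain m G where dec: "?F j = y j ^ m * (?F (Suc j) + y j * G)" and G: "keys G \<subseteq> B"
      by (rule that[OF layer_sum_step[OF A(1) j, of "\<lambda>b. const (c b)" y] closed[OF j]])
    have "keys (?F (Suc j)) \<subseteq> B"
      unfolding layer_sum_def by (intro closed_sum closed_mult closed_const closed_prod closed_power yB) auto
    then show ?case
      using mem_primeideal_of_mult_power[OF P[of j] P[of "Suc j"] _ _ _ yB[OF j] _ G]
        Suc dec strict[OF j] y[OF j] j by auto
  qed
  obtain b where "b \<in> A" "lex_min_layer A (Suc n) = {b}"
    using lex_min_layer_last[OF A(1-3)] .
  then have "?F (Suc n) = const (c b)" by (simp add: layer_sum_def del: lex_min_layer.simps)
  then show False using F[of "Suc n"] const_mem_primeideal[OF P] A(4) \<open>b \<in> A\<close> by auto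
qed

end

section \<open>Monomial prime ideals\<close>

definition positive_below :: "nat \<Rightarrow> (nat \<Rightarrow>\<^sub>0 nat) set" where
  "positive_below j = {g. \<exists>i<j. 0 < lookup g i}"

definition face_ideal :: "(nat \<Rightarrow>\<^sub>0 nat) set \<Rightarrow> nat \<Rightarrow> 'k::field pm set" where
  "face_ideal B j = {p. keys p \<subseteq> B \<and> keys p \<subseteq> positive_below j}"

lemma positive_below_mono: "i \<le> j \<Longrightarrow> positive_below i \<subseteq> positive_below j"
  by (force simp: positive_below_def)

lemma keys_mult_positive_below:
  fixes p q :: "'k::field pm"
  assumes "keys p \<subseteq> positive_below j \<or> keys q \<subseteq> positive_below j"
  shows "keys (p * q) \<subseteq> positive_below j"
proof
  fix x assume "x \<in> keys (p * q)"
  then obtain a b where "x = a + b" "a \<in> keys p" "b \<in> keys q" using keys_mult[of p q] by blast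
  then show "x \<in> positive_below j" using assms by (force simp: positive_below_def lookup_add)
qed

lemma keys_mult_not_positive_below:
  fixes p q :: "'k::field pm"
  assumes "keys p \<subseteq> - positive_below j" "keys q \<subseteq> - positive_below j"
  shows "keys (p * q) \<subseteq> - positive_below j"
proof
  fix x assume "x \<in> keys (p * q)"
  then obtain a b where "x = a + b" "a \<in> keys p" "b \<in> keys q" using keys_mult[of p q] by blast
  then show "x \<in> - positive_below j" using assms by (force simp: positive_below_def lookup_add)
qed

definition restrict_keys :: "'k::comm_monoid_add pm \<Rightarrow> (nat \<Rightarrow>\<^sub>0 nat) set \<Rightarrow> 'k pm" where
  "restrict_keys p S = (\<Sum>g\<in>keys p \<inter> S. single g (lookup p g))"

lemma lookup_restrict_keys: "lookup (restrict_keys p S) k = (if k \<in> S then lookup p k else 0)"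
proof -
  have "lookup (restrict_keys p S) k = (\<Sum>g\<in>keys p \<inter> S. if g = k then lookup p g else 0)"
    by (simp add: restrict_keys_def lookup_sum lookup_single when_def)
  then show ?thesis by (simp add: sum.delta' in_keys_iff)
qed

lemma keys_restrict_keys: "keys (restrict_keys p S) \<subseteq> S"
  by (auto simp: in_keys_iff lookup_restrict_keys split: if_splits)

lemma keys_diff_restrict_keys: "keys (p - restrict_keys p S) \<subseteq> - S"
  by (auto simp: in_keys_iff lookup_restrict_keys lookup_minus split: if_splits)

lemma keys_mult_positive_below_imp:
  fixes p q :: "'k::field pm"
  assumes pq: "keys (p * q) \<subseteq> positive_below j"
  shows "keys p \<subseteq> positive_below j \<or> keys q \<subseteq> positive_below j"
proof (rule ccontr)
  assume *: "\<not> ?thesis"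
  \<comment> \<open>the parts of p and q supported outside positive_below j have a nonzero product
    that is again supported outside it\<close>
  define p' where "p' = restrict_keys p (- positive_below j)"
  define q' where "q' = restrict_keys q (- positive_below j)"
  have p_rest: "keys (p - p') \<subseteq> positive_below j" and q_rest: "keys (q - q') \<subseteq> positive_below j"
    using keys_diff_restrict_keys[of _ "- positive_below j"] unfolding p'_def q'_def by simp_all
  have "p' \<noteq> 0" "q' \<noteq> 0" using * p_rest q_rest by auto
  then have "p' * q' \<noteq> 0" by simp
  have "keys ((p - p') * q) \<subseteq> positive_below j" "keys (p' * (q - q')) \<subseteq> positive_below j"
    by (simp_all add: keys_mult_positive_below p_rest q_rest)
  then have "keys (p * q - ((p - p') * q + p' * (q - q'))) \<subseteq> positive_below j"
    using pq keys_diff[of "p * q"] keys_add[of "(p - p') * q"] by blast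
  moreover have "p' * q' = p * q - ((p - p') * q + p' * (q - q'))" by (simp add: algebra_simps)
  ultimately have "keys (p' * q') \<subseteq> positive_below j" by simp
  moreover have "keys (p' * q') \<subseteq> - positive_below j"
    unfolding p'_def q'_def by (intro keys_mult_not_positive_below keys_restrict_keys)
  ultimately have "keys (p' * q') = {}" by blast
  then show False using \<open>p' * q' \<noteq> 0\<close> by simp
qed

context exponent_monoid
begin

lemma face_ideal_ideal: "ideal (face_ideal B j) (R :: 'k::field pm ring)"
proof (rule semigroup_ring_idealI)
  fix a b :: "'k pm" assume a: "a \<in> face_ideal B j"
  then show "- a \<in> face_ideal B j" by (simp add: face_ideal_def)
  show "b \<in> face_ideal B j \<Longrightarrow> a + b \<in> face_ideal B j"
    using a keys_add[of a b] closed_add[of a b] by (auto simp: face_ideal_def)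
  show "b \<in> carrier R \<Longrightarrow> b * a \<in> face_ideal B j"
    using a closed_mult[of b a] keys_mult_positive_below[of b j a] by (simp add: face_ideal_def)
qed (auto simp: face_ideal_def)

lemma face_ideal_prime: "primeideal (face_ideal B j) (R :: 'k::field pm ring)"
proof (rule primeidealI)
  show "ideal (face_ideal B j) (R :: 'k pm ring)" by (rule face_ideal_ideal)
  show "cring (R :: 'k pm ring)" by (rule semigroup_ring_cring)
  have "(1 :: 'k pm) \<notin> face_ideal B j" by (simp add: face_ideal_def positive_below_def)
  moreover have "(1 :: 'k pm) \<in> carrier R" by (simp add: zero_mem)
  ultimately show "carrier (R :: 'k pm ring) \<noteq> face_ideal B j" by blast
  fix a b :: "'k pm"
  assume "a \<in> carrier R" "b \<in> carrier R" "a \<otimes>\<^bsub>R\<^esub> b \<in> face_ideal B j"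
  then show "a \<in> face_ideal B j \<or> b \<in> face_ideal B j"
    using keys_mult_positive_below_imp[of a b j] by (simp add: face_ideal_def)
qed

lemma face_ideal_strict_mono:
  assumes "i < j" "single i e \<in> B" "e > 0"
  shows "face_ideal B i \<subset> (face_ideal B j :: 'k::field pm set)"
proof
  show "face_ideal B i \<subseteq> (face_ideal B j :: 'k pm set)"
    using positive_below_mono[of i j] assms(1) by (auto simp: face_ideal_def)
  have "single (single i e) (1::'k) \<in> face_ideal B j - face_ideal B i"
    using assms by (auto simp: face_ideal_def positive_below_def lookup_single)
  then show "face_ideal B i \<noteq> (face_ideal B j :: 'k pm set)" by blast
qed

theorem krull_dim_eq:
  assumes "B \<subseteq> Nvec n" and pure_powers: "\<And>i. i < n \<Longrightarrow> \<exists>e>0. single i e \<in> B"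
  shows "krull_dim (R :: 'k::field pm ring) = n"
proof -
  define chains where "chains = {enat (length Ps - 1) | Ps. Ps \<noteq> [] \<and>
      (\<forall>P \<in> set Ps. primeideal P (R :: 'k pm ring)) \<and> sorted_wrt (\<subset>) Ps}"
  have chain_length: "length Ps \<le> n + 1" if "\<forall>P \<in> set Ps. primeideal P (R :: 'k pm ring)"
    and "sorted_wrt (\<subset>) Ps" for Ps
  proof (rule ccontr)
    assume "\<not> ?thesis"
    then have "Suc n < length Ps" by simp
    then show False
      using no_prime_chain_longer_than_rank[OF assms(1), of "\<lambda>i. Ps ! i"]
        that sorted_wrt_nth_less[OF that(2)] by (simp add: nth_mem)
  qed
  have "x \<le> enat n" if x: "x \<in> chains" for x
  proof -
    obtain Ps where "x = enat (length Ps - 1)" "\<forall>P \<in> set Ps. primeideal P (R :: 'k pm ring)"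
      "sorted_wrt (\<subset>) Ps"
      using x unfolding chains_def by blast
    with chain_length show ?thesis by fastforce
  qed
  moreover have "enat n \<in> chains"
  proof -
    define Ps where "Ps = map (\<lambda>j. face_ideal B j :: 'k pm set) [0..<Suc n]"
    have "sorted_wrt (\<subset>) Ps"
    proof (unfold sorted_wrt_iff_nth_less, intro allI impI)
      fix i j assume ij: "i < j" "j < length Ps"
      then obtain e where "e > 0" "single i e \<in> B"
        using pure_powers[of i] unfolding Ps_def by auto
      then show "Ps ! i \<subset> Ps ! j"
        using face_ideal_strict_mono ij unfolding Ps_def by (simp del: upt_Suc)
    qed
    moreover have "\<forall>P \<in> set Ps. primeideal P (R :: 'k pm ring)"
      unfolding Ps_def using face_ideal_prime by auto
    moreover have "length Ps - 1 = n" "Ps \<noteq> []" unfolding Ps_def by simp_all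
    ultimately show ?thesis unfolding chains_def by (intro CollectI exI[of _ Ps]) simp
  qed
  ultimately show ?thesis
    unfolding krull_dim_def chains_def[symmetric]
    by (intro antisym Sup_least Sup_upper) auto
qed

end

section \<open>Depth\<close>

context exponent_monoid
begin

lemma Idl_empty_eq: "Idl\<^bsub>R\<^esub> {} = {0 :: 'k::field pm}"
proof -
  interpret cring "R :: 'k pm ring" by (rule semigroup_ring_cring)
  have "Idl\<^bsub>R\<^esub> {} \<subseteq> {\<zero>\<^bsub>R :: 'k pm ring\<^esub>}" by (rule genideal_minimal[OF zeroideal]) simp
  moreover have "\<zero>\<^bsub>R :: 'k pm ring\<^esub> \<in> Idl\<^bsub>R\<^esub> {}"
    using additive_subgroup.zero_closed[OF ideal.axioms(1)[OF genideal_ideal]] by simp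
  ultimately show ?thesis by auto
qed

lemma Idl_singleton_eq:
  "x \<in> carrier (R :: 'k::field pm ring) \<Longrightarrow> Idl\<^bsub>R\<^esub> {x} = {r * x | r. r \<in> carrier R}"
proof -
  interpret cring "R :: 'k pm ring" by (rule semigroup_ring_cring)
  show "x \<in> carrier R \<Longrightarrow> ?thesis" using cgenideal_eq_genideal unfolding cgenideal_def by simp
qed

lemma mem_homog_max_ideal_iff: "p \<in> homog_max_ideal B \<longleftrightarrow> keys p \<subseteq> B \<and> 0 \<notin> keys p"
  by (simp add: homog_max_ideal_def in_keys_iff)

lemma homog_max_ideal_ideal: "ideal (homog_max_ideal B) (R :: 'k::field pm ring)"
proof (rule semigroup_ring_idealI)
  fix a b :: "'k pm" assume a: "a \<in> homog_max_ideal B"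
  show "b \<in> homog_max_ideal B \<Longrightarrow> a + b \<in> homog_max_ideal B"
    using a closed_add[of a b] by (simp add: homog_max_ideal_def lookup_add)
  show "b \<in> carrier R \<Longrightarrow> b * a \<in> homog_max_ideal B"
  proof -
    assume b: "b \<in> carrier R"
    have "0 \<notin> keys (b * a)"
    proof
      assume "0 \<in> keys (b * a)"
      then obtain u v where "u + v = 0" "v \<in> keys a" using keys_mult[of b a] by force
      then have "v = 0" by (metis add_is_0 lookup_add lookup_zero poly_mapping_eqI)
      then show False using a \<open>v \<in> keys a\<close> by (simp add: mem_homog_max_ideal_iff)
    qed
    then show ?thesis using a b closed_mult[of b a] by (simp add: mem_homog_max_ideal_iff)
  qed
qed (auto simp: homog_max_ideal_def)

lemma depth_le_one:
  assumes hole: "w \<notin> B" "\<And>b. b \<in> B \<Longrightarrow> b \<noteq> 0 \<Longrightarrow> w + b \<in> B"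
    and regular: "regular_seq (R :: 'k::field pm ring) (homog_max_ideal B) xs"
  shows "length xs \<le> 1"
proof (rule ccontr)
  assume "\<not> length xs \<le> 1"
  then obtain x y rest where xs: "xs = x # y # rest" by (cases xs; cases "tl xs") auto
  have x: "keys x \<subseteq> B" "0 \<notin> keys x" and y: "keys y \<subseteq> B" "0 \<notin> keys y"
    using regular xs by (auto simp: regular_seq_def mem_homog_max_ideal_iff)
  have x_regular: "\<And>r. r \<in> carrier R \<Longrightarrow> x * r \<in> Idl\<^bsub>R\<^esub> {} \<Longrightarrow> r \<in> Idl\<^bsub>R\<^esub> {}"
    using regular xs unfolding regular_seq_def by (auto dest!: spec[of _ 0])
  have "x \<noteq> 0"
  proof
    assume "x = 0"
    then show False using x_regular[of 1] zero_mem unfolding Idl_empty_eq by simp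
  qed
  have y_regular: "\<And>r. r \<in> carrier R \<Longrightarrow> y * r \<in> Idl\<^bsub>R\<^esub> {x} \<Longrightarrow> r \<in> Idl\<^bsub>R\<^esub> {x}"
    using regular xs unfolding regular_seq_def by (auto dest!: spec[of _ 1])
  define z where "z = single w (1::'k)"
  \<comment> \<open>z lies outside k[B] but multiplies the maximal ideal into k[B]\<close>
  have z_mult: "keys (z * p) \<subseteq> B" if "keys p \<subseteq> B" "0 \<notin> keys p" for p
  proof
    fix g assume "g \<in> keys (z * p)"
    then obtain a b where "g = a + b" "a \<in> keys z" "b \<in> keys p" using keys_mult[of z p] by blast
    then show "g \<in> B" using that hole(2) unfolding z_def by (auto split: if_splits)
  qed
  have "(z * y) * x \<in> Idl\<^bsub>R\<^esub> {x}"
    using Idl_singleton_eq[of x] x z_mult[OF y] by auto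
  then have "y * (z * x) \<in> Idl\<^bsub>R\<^esub> {x}" by (simp add: mult_ac)
  then have "z * x \<in> Idl\<^bsub>R\<^esub> {x}" using y_regular z_mult[OF x] by simp
  then obtain r where "z * x = r * x" "keys r \<subseteq> B" using Idl_singleton_eq[of x] x by auto
  then have "keys z \<subseteq> B" using \<open>x \<noteq> 0\<close> by simp
  then show False using hole(1) unfolding z_def by simp
qed

lemma regular_seq_monomial:
  assumes "b \<in> B" "b \<noteq> 0"
  shows "regular_seq (R :: 'k::field pm ring) (homog_max_ideal B) [single b 1]"
proof -
  interpret cring "R :: 'k pm ring" by (rule semigroup_ring_cring)
  have x: "single b (1::'k) \<in> homog_max_ideal B"
    using assms by (simp add: mem_homog_max_ideal_iff)
  have "Idl\<^bsub>R\<^esub> {single b (1::'k)} \<subseteq> homog_max_ideal B"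
    by (rule genideal_minimal[OF homog_max_ideal_ideal]) (use x in simp)
  moreover have "(1::'k pm) \<notin> homog_max_ideal B" by (simp add: homog_max_ideal_def)
  moreover have "(1::'k pm) \<in> carrier R" by (simp add: zero_mem)
  ultimately have "Idl\<^bsub>R\<^esub> {single b (1::'k)} \<noteq> carrier R" by blast
  moreover have "single b (1::'k) \<noteq> 0" by (metis lookup_single_eq lookup_zero zero_neq_one)
  ultimately show ?thesis
    using x unfolding regular_seq_def by (simp add: less_Suc_eq Idl_empty_eq)
qed

theorem depth_eq_one:
  assumes "w \<notin> B" "\<And>b. b \<in> B \<Longrightarrow> b \<noteq> 0 \<Longrightarrow> w + b \<in> B" and "b \<in> B" "b \<noteq> 0"
  shows "depth (R :: 'k::field pm ring) (homog_max_ideal B) = 1"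
proof -
  let ?lengths = "{enat (length xs) | xs. regular_seq (R :: 'k pm ring) (homog_max_ideal B) xs}"
  have "x \<le> 1" if "x \<in> ?lengths" for x
    using that depth_le_one[OF assms(1,2)] by (auto simp: one_enat_def)
  moreover have "1 \<in> ?lengths"
    using regular_seq_monomial[OF assms(3,4)] by (force simp: one_enat_def)
  ultimately show ?thesis
    unfolding depth_def by (intro antisym Sup_least Sup_upper) auto
qed

end

section \<open>The semigroup generated by U\<close>

definition deg :: "nat \<Rightarrow> (nat \<Rightarrow>\<^sub>0 nat) \<Rightarrow> nat" where
  "deg n g = (\<Sum>i<n. lookup g i)"

lemma deg_add: "deg n (a + b) = deg n a + deg n b"
  by (simp add: deg_def lookup_add sum.distrib)

lemma deg_single: "i < n \<Longrightarrow> deg n (single i e) = e"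
  by (simp add: deg_def lookup_single when_def)

lemma Nvec_single: "i < n \<Longrightarrow> single i e \<in> Nvec n"
  by (simp add: Nvec_def)

lemma Nvec_deg_eq_0: "g \<in> Nvec n \<Longrightarrow> deg n g = 0 \<Longrightarrow> g = 0"
  by (rule poly_mapping_eqI) (metis deg_def lessThan_iff lookup_Nvec_eq_0 lookup_zero sum_eq_0_iff finite_lessThan)

lemma Nvec_le: "w \<in> Nvec n \<Longrightarrow> (\<And>l. lookup v l \<le> lookup w l) \<Longrightarrow> v \<in> Nvec n"
  unfolding Nvec_def by (metis (mono_tags) in_keys_iff le_zero_eq mem_Collect_eq subset_iff)

lemma exists_le_sum_eq:
  fixes a :: "nat \<Rightarrow> nat"
  assumes "k \<le> (\<Sum>i<n. a i)"
  shows "\<exists>c. (\<forall>i. c i \<le> a i) \<and> (\<Sum>i<n. c i) = k"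
  using assms
proof (induction k)
  case 0
  show ?case by (intro exI[of _ "\<lambda>_. 0"]) simp
next
  case (Suc k)
  then obtain c where c: "\<forall>i. c i \<le> a i" "(\<Sum>i<n. c i) = k" by auto
  have "\<exists>i<n. c i < a i"
  proof (rule ccontr)
    assume "\<not> ?thesis"
    then have "(\<Sum>i<n. a i) \<le> (\<Sum>i<n. c i)" by (intro sum_mono) (meson lessThan_iff not_less)
    then show False using Suc.prems c(2) by simp
  qed
  then obtain i where i: "i < n" "c i < a i" by blast
  have "(\<Sum>l<n. c l + (if l = i then 1 else 0)) = Suc k"
    using i(1) c(2) by (simp add: sum.distrib)
  then show ?case
    using c(1) i(2) by (intro exI[of _ "\<lambda>l. c l + (if l = i then 1 else 0)"]) (auto simp: Suc_le_eq)
qed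

locale almost_veronese =
  fixes n d :: nat and U :: "(nat \<Rightarrow>\<^sub>0 nat) set"
  assumes n_ge_2: "n \<ge> 2" and d_gt_2: "d > 2"
    and U_large: "{m \<in> T n d. maxv n m \<ge> d - 1} \<subseteq> U" and U_psubset: "U \<subset> T n d"
begin

abbreviation B :: "(nat \<Rightarrow>\<^sub>0 nat) set" where "B \<equiv> gen_semigroup U"

lemma mem_U_imp: "u \<in> U \<Longrightarrow> u \<in> Nvec n \<and> deg n u = d"
  using U_psubset by (auto simp: T_def deg_def)

lemma mem_B_imp: "b \<in> B \<Longrightarrow> b \<in> Nvec n \<and> d dvd deg n b"
proof (induction b rule: gen_semigroup.induct)
  case zero
  then show ?case by (simp add: Nvec_def deg_def)
next
  case (add u b)
  then show ?case using mem_U_imp[of u] Nvec_add by (simp add: deg_add)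
qed

lemma mem_U_if_deg:
  assumes "b \<in> B" "deg n b = d"
  shows "b \<in> U"
  using assms(1)
proof (cases rule: gen_semigroup.cases)
  case (add u b')
  then have "b' = 0" using assms(2) mem_U_imp[of u] mem_B_imp[of b'] Nvec_deg_eq_0[of b'] by (simp add: deg_add)
  then show ?thesis using add by simp
qed (use assms(2) d_gt_2 in \<open>simp add: deg_def\<close>)

lemma generator_mem_U:
  assumes "i < n" "j < n"
  shows "single i (d - 1) + single j 1 \<in> U"
proof -
  let ?u = "single i (d - 1) + single j (1::nat)"
  have "?u \<in> T n d"
    using assms d_gt_2 deg_add[of n "single i (d - 1)"] Nvec_add[OF Nvec_single Nvec_single]
    by (simp add: T_def deg_single flip: deg_def)
  moreover have "d - 1 \<le> maxv n ?u"
  proof -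
    have "d - 1 \<le> lookup ?u i" by (simp add: lookup_add)
    also have "\<dots> \<le> maxv n ?u" unfolding maxv_def using assms(1) by (intro Max_ge) auto
    finally show ?thesis .
  qed
  ultimately show ?thesis using U_large by blast
qed

text \<open>In the quota conditions below, c i is the number of generators (d - 1) e_i + e_j that a
  decomposition of w into elements of U is to use.\<close>

lemma quota_indices:
  assumes "deg n w = Suc k * d" "(\<Sum>i<n. c i) = Suc k"
  obtains i j where "i < n" "0 < c i" "j < n" "(d - 1) * c j < lookup w j"
proof -
  have "\<exists>i<n. 0 < c i"
  proof (rule ccontr)
    assume "\<not> ?thesis"
    then have "(\<Sum>i<n. c i) = 0" by simp
    then show False using assms(2) by simp
  qed
  moreover have "\<exists>j<n. (d - 1) * c j < lookup w j"
  proof -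
    have "(\<Sum>l<n. (d - 1) * c l) = (d - 1) * Suc k"
      using assms(2) by (simp flip: sum_distrib_left)
    also have "\<dots> < d * Suc k" using d_gt_2 by (intro mult_strict_right_mono) auto
    also have "\<dots> = (\<Sum>l<n. lookup w l)" using assms(1) by (simp add: deg_def)
    finally show ?thesis by (meson lessThan_iff not_less sum_mono)
  qed
  ultimately show ?thesis using that by blast
qed

lemma quota_step:
  assumes w: "w \<in> Nvec n" "deg n w = Suc k * d" and c: "(\<Sum>i<n. c i) = Suc k"
    and quota: "\<And>i. i < n \<Longrightarrow> (d - 1) * c i \<le> lookup w i"
  obtains i j w' c' where "i < n" "j < n" "w = (single i (d - 1) + single j 1) + w'"
    "w' \<in> Nvec n" "deg n w' = k * d" "(\<Sum>i<n. c' i) = k"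
    "\<And>l. l < n \<Longrightarrow> (d - 1) * c' l \<le> lookup w' l"
proof -
  obtain i j where i: "i < n" "0 < c i" and j: "j < n" "(d - 1) * c j < lookup w j"
    using quota_indices[OF w(2) c] .
  define u where "u = single i (d - 1) + single j 1"
  define w' where "w' = w - u"
  define c' where "c' l = c l - (if l = i then 1 else 0)" for l
  have lookup_u: "lookup u l = (if l = i then d - 1 else 0) + (if l = j then 1 else 0)" for l
    by (simp add: u_def lookup_add lookup_single when_def eq_commute)
  have u_le: "lookup u l \<le> lookup w l" for l
  proof -
    have "d - 1 \<le> (d - 1) * c i" using i(2) by simp
    then have "d - 1 \<le> lookup w i" and "i = j \<Longrightarrow> d - 1 < lookup w i"
      using quota[OF i(1)] j(2) by (metis order_trans, metis le_less_trans)
    then show ?thesis using j(2) by (auto simp: lookup_u)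
  qed
  have split: "w = u + w'"
    by (rule poly_mapping_eqI) (simp add: w'_def lookup_add lookup_minus u_le)
  have "w' \<in> Nvec n" using w(1) by (rule Nvec_le) (simp add: w'_def lookup_minus)
  moreover have "deg n w' = k * d"
    using w(2) d_gt_2 i(1) j(1) split by (simp add: deg_add u_def deg_single)
  moreover have "(\<Sum>l<n. c' l) = k"
  proof -
    have "(\<Sum>l<n. c l) = (\<Sum>l<n. c' l + (if l = i then 1 else 0))"
      using i(2) by (intro sum.cong) (auto simp: c'_def)
    then show ?thesis using c i(1) by (simp add: sum.distrib)
  qed
  moreover have "(d - 1) * c' l \<le> lookup w' l" if "l < n" for l
  proof -
    have "(d - 1) * c' l + lookup u l \<le> lookup w l"
      using quota[OF that] j(2) i(2)
      by (cases "l = i"; cases "l = j") (auto simp: c'_def lookup_u diff_mult_distrib2)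
    then show ?thesis by (simp add: w'_def lookup_minus)
  qed
  ultimately show ?thesis by (rule that[OF i(1) j(1) split[unfolded u_def]])
qed

lemma mem_B_if_quota:
  assumes "w \<in> Nvec n" "deg n w = k * d" "(\<Sum>i<n. c i) = k"
    and "\<And>i. i < n \<Longrightarrow> (d - 1) * c i \<le> lookup w i"
  shows "w \<in> B"
  using assms
proof (induction k arbitrary: w c)
  case 0
  then show ?case using Nvec_deg_eq_0[of w n] gen_semigroup.zero by simp
next
  case (Suc k)
  show ?case
  proof (rule quota_step[OF Suc.prems])
    fix i j w' c'
    assume ij: "i < n" "j < n" and split: "w = (single i (d - 1) + single j 1) + w'"
      and "w' \<in> Nvec n" "deg n w' = k * d" "(\<Sum>i<n. c' i) = k"
      and "\<And>l. l < n \<Longrightarrow> (d - 1) * c' l \<le> lookup w' l"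
    then have "w' \<in> B" by (intro Suc.IH)
    then show ?thesis unfolding split by (rule gen_semigroup.add[OF generator_mem_U[OF ij]])
  qed
qed

lemma mem_B_if_large_degree:
  assumes w: "w \<in> Nvec n" and deg: "deg n w = k * d" and k: "n * (d - 2) \<le> k"
  shows "w \<in> B"
proof -
  define q where "q = d - 1"
  have q: "0 < q" "d = q + 1" "d - 2 = q - 1" using d_gt_2 unfolding q_def by auto
  have "k * d = (\<Sum>i<n. lookup w i)" using deg by (simp add: deg_def)
  also have "\<dots> \<le> (\<Sum>i<n. q * (lookup w i div q) + (q - 1))"
  proof (rule sum_mono)
    fix i
    have "lookup w i mod q < q" using q(1) by simp
    then show "lookup w i \<le> q * (lookup w i div q) + (q - 1)"
      using mult_div_mod_eq[of q "lookup w i"] by linarith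
  qed
  also have "\<dots> = q * (\<Sum>i<n. lookup w i div q) + n * (d - 2)"
    by (simp add: q(3) sum.distrib sum_distrib_left)
  finally have "q * k + k \<le> q * (\<Sum>i<n. lookup w i div q) + n * (d - 2)"
    by (simp add: q(2) algebra_simps)
  then have "q * k \<le> q * (\<Sum>i<n. lookup w i div q)" using k by linarith
  then have "k \<le> (\<Sum>i<n. lookup w i div q)" using q(1) by simp
  then obtain c where c: "\<forall>i. c i \<le> lookup w i div q" "(\<Sum>i<n. c i) = k"
    using exists_le_sum_eq by blast
  show ?thesis
  proof (rule mem_B_if_quota[OF w deg c(2)])
    fix i
    have "q * c i \<le> q * (lookup w i div q)" using c(1) by simp
    also have "\<dots> \<le> lookup w i" by (simp add: mult.commute)
    finally show "(d - 1) * c i \<le> lookup w i" by (simp add: q_def)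
  qed
qed

text \<open>Only finitely many degrees can be missing from B, so a missing vector of maximal degree
  is filled by adding any nonzero element of B.\<close>

lemma exists_hole:
  obtains w where "w \<notin> B" "\<And>b. b \<in> B \<Longrightarrow> b \<noteq> 0 \<Longrightarrow> w + b \<in> B"
proof -
  define missing where "missing w \<longleftrightarrow> w \<in> Nvec n \<and> d dvd deg n w \<and> w \<notin> B" for w
  obtain m where m: "m \<in> T n d" "m \<notin> U" using U_psubset by blast
  then have "missing m"
    using mem_U_if_deg[of m] by (auto simp: missing_def T_def deg_def)
  moreover have "deg n w < n * (d - 2) * d + 1" if w: "missing w" for w
  proof -
    obtain k where k: "deg n w = k * d" using w unfolding missing_def dvd_def by (metis mult.commute)
    then have "k < n * (d - 2)"
      using mem_B_if_large_degree[of w k] w unfolding missing_def by (meson not_less)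
    then show ?thesis using k by (simp add: less_Suc_eq_le)
  qed
  ultimately obtain w where w: "missing w" and max: "\<And>v. missing v \<Longrightarrow> deg n v \<le> deg n w"
    using ex_has_greatest_nat[of missing m "deg n"] by blast
  have "w + b \<in> B" if "b \<in> B" "b \<noteq> 0" for b
    using that(1)
  proof (cases rule: gen_semigroup.cases)
    case (add u b')
    have u: "u \<in> Nvec n" "deg n u = d" using mem_U_imp[OF add(2)] by auto
    have "w + u \<in> B"
    proof (rule ccontr)
      assume "w + u \<notin> B"
      then have "missing (w + u)" using w u Nvec_add by (simp add: missing_def deg_add)
      then show False using max[of "w + u"] u d_gt_2 by (simp add: deg_add)
    qed
    then have "(w + u) + b' \<in> B" using gen_semigroup_add add(3) by blast
    then show ?thesis using add(1) by (simp add: add.assoc)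
  qed (use that(2) in simp)
  then show ?thesis using that w unfolding missing_def by blast
qed

end

theorem theorem5p3:
  fixes n d :: nat and U :: "(nat \<Rightarrow>\<^sub>0 nat) set"
  assumes "n \<ge> 2" and "d > 2"
    and "{m \<in> T n d. maxv n m \<ge> d - 1} \<subseteq> U" and "U \<subset> T n d"
  shows "krull_dim (semigroup_ring (gen_semigroup U) :: ((nat \<Rightarrow>\<^sub>0 nat) \<Rightarrow>\<^sub>0 'k::field) ring) = enat n
    \<and> depth (semigroup_ring (gen_semigroup U) :: ((nat \<Rightarrow>\<^sub>0 nat) \<Rightarrow>\<^sub>0 'k::field) ring)
         (homog_max_ideal (gen_semigroup U)) = 1"
proof -
  interpret almost_veronese n d U using assms by unfold_locales
  interpret exponent_monoid "gen_semigroup U"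
    by unfold_locales (auto intro: gen_semigroup.zero gen_semigroup_add)
  have pure_power: "single i d \<in> gen_semigroup U" if "i < n" for i
    using gen_semigroup_base[OF generator_mem_U[OF that that]] d_gt_2 by (simp flip: single_add)
  have "krull_dim (semigroup_ring (gen_semigroup U) :: 'k pm ring) = n"
  proof (rule krull_dim_eq)
    show "gen_semigroup U \<subseteq> Nvec n" using mem_B_imp by blast
    show "\<exists>e>0. single i e \<in> gen_semigroup U" if "i < n" for i
      using pure_power[OF that] d_gt_2 by (intro exI[of _ d]) simp
  qed
  moreover have "depth (semigroup_ring (gen_semigroup U) :: 'k pm ring) (homog_max_ideal (gen_semigroup U)) = 1"
  proof -
    obtain w where w: "w \<notin> gen_semigroup U"
      and filled: "\<And>b. b \<in> gen_semigroup U \<Longrightarrow> b \<noteq> 0 \<Longrightarrow> w + b \<in> gen_semigroup U"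
      using exists_hole by blast
    have "single 0 d \<noteq> (0 :: nat \<Rightarrow>\<^sub>0 nat)"
      using d_gt_2 by (metis gr_implies_not0 lookup_single_eq lookup_zero)
    then show ?thesis using n_ge_2 by (intro depth_eq_one[OF w filled pure_power]) simp_all
  qed
  ultimately show ?thesis by simp
qed

end
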